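(* Let $m\ge 2$ be a prime and $n\ge 1$ an integer. If $p(m,n)\neq 0$, then $n \equiv r \pmod{m^2}$ for some $r\in\{-1,0,1,\dots,m-2\}$.
   Context: For integers $m\ge 2$, $n\ge 1$, a valid $(m,n)$-sequence is a sequence $(a_1,\dots,a_{mn})$ with entries in $\{1,\dots,n\}$ in which each $k\in\{1,\dots,n\}$ occurs exactly $m$ times, and such that any two consecutive occurrences of $k$ are separated by exactly $k$ other terms; equivalently, there is an index $\theta_k$ such that $k$ occurs exactly at the positions $\theta_k,\ \theta_k+(k+1),\ \theta_k+2(k+1),\dots,\theta_k+(m-1)(k+1)$ (all in $\{1,\dots,mn\}$). Example: $3\,1\,2\,1\,3\,2$ is a valid $(2,3)$-sequence. The reversal $(a_{mn},\dots,a_1)$ of a valid sequence is again valid; $p(m,n)$ denotes the number of valid $(m,n)$-sequences counted up to reversal (i.e. the number of equivalence classes of valid $(m,n)$-sequences under identifying a sequence with its reversal). *)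

theory Defs
  imports "HOL-Computational_Algebra.Primes" "HOL-Number_Theory.Cong"
begin

text \<open>A list xs represents the sequence (a_1,...,a_{mn}) with a_i = xs ! (i - 1).\<close>
definition valid_seq :: "nat \<Rightarrow> nat \<Rightarrow> nat list \<Rightarrow> bool" where
  "valid_seq m n xs \<longleftrightarrow>
     length xs = m * n \<and> set xs \<subseteq> {1..n} \<and>
     (\<forall>k\<in>{1..n}. \<exists>\<theta>. 1 \<le> \<theta> \<and> \<theta> + (m - 1) * (k + 1) \<le> m * n \<and>
        {i \<in> {1..m * n}. xs ! (i - 1) = k} = {\<theta> + j * (k + 1) | j. j < m})"

definition p :: "nat \<Rightarrow> nat \<Rightarrow> nat" where
  "p m n = card ((\<lambda>xs. {xs, rev xs}) ` {xs. valid_seq m n xs})"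

end

theory Submission
  imports Defs
begin

(* Let m be prime and let xs be a valid (m,n)-sequence, where the value k
   occupies the m positions theta_k + j(k+1), j < m.  Count the n positions in
   {1..mn} that are multiples of m according to the value they carry.  If m does
   not divide k+1, the progression theta_k + j(k+1), j < m, runs through all
   residues mod m and meets exactly one multiple of m; if m divides k+1 it meets
   either m or none.  Hence n = #{k <= n. m not dvd k+1} + m*c, while trivially
   n = #{k <= n. m not dvd k+1} + #{k <= n. m dvd k+1}.  The latter count is
   (n+1) div m, so m divides (n+1) div m, i.e. n+1 = m^2 c + s with 0 <= s < m,
   which is the claim n = s - 1 (mod m^2). *)

lemma card_multiples_upto:
  assumes "m > 0"
  shows "card {x \<in> {1..N}. m dvd x} = N div m"
proof -
  have "{x \<in> {1..N}. m dvd x} = (\<lambda>i. m * i) ` {1..N div m}"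
  proof safe
    fix x assume "x \<in> {1..N}" "m dvd x"
    then obtain i where "x = m * i" by blast
    with \<open>x \<in> {1..N}\<close> assms have "i \<in> {1..N div m}"
      by (auto simp: div_greater_zero_iff less_eq_div_iff_mult_less_eq mult.commute)
    then show "x \<in> (\<lambda>i. m * i) ` {1..N div m}" using \<open>x = m * i\<close> by blast
  next
    fix i assume "i \<in> {1..N div m}"
    then show "m * i \<in> {1..N}" using assms
      by (auto simp: less_eq_div_iff_mult_less_eq mult.commute)
  qed auto
  moreover have "inj_on (\<lambda>i. m * i) {1..N div m}" using assms by (auto intro: inj_onI)
  ultimately show ?thesis by (simp add: card_image)
qed

definition ap_multiples :: "nat \<Rightarrow> nat \<Rightarrow> nat \<Rightarrow> nat set" where
  "ap_multiples m a d = {j \<in> {..<m}. m dvd a + j * d}"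

(* If d is invertible mod m, the m terms a + j*d form a complete residue system
   mod m, so exactly one of them is a multiple of m. *)
lemma card_ap_multiples_coprime:
  assumes "m > 0" and "coprime m d"
  shows "card (ap_multiples m a d) = 1"
proof -
  define g where "g j = (a + j * d) mod m" for j
  have inj: "inj_on g {..<m}"
  proof (rule inj_onI)
    fix x y assume "x \<in> {..<m}" "y \<in> {..<m}" "g x = g y"
    then have "[x * d = y * d] (mod m)"
      by (simp add: g_def cong_def[symmetric] cong_add_lcancel_nat)
    then have "[x = y] (mod m)"
      using assms(2) by (metis cong_mult_rcancel_nat coprime_commute)
    then show "x = y" using \<open>x \<in> {..<m}\<close> \<open>y \<in> {..<m}\<close> by (simp add: cong_def)
  qed
  have "g ` {..<m} = {..<m}"
    using inj assms(1) by (intro endo_inj_surj) (auto simp: g_def)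
  then obtain j0 where "j0 < m" "g j0 = 0" using assms(1) by (metis imageE lessThan_iff)
  have "ap_multiples m a d = {j0}"
  proof safe
    fix j assume "j \<in> ap_multiples m a d"
    then have "j < m" "g j = g j0"
      using \<open>g j0 = 0\<close> by (auto simp: ap_multiples_def g_def dvd_eq_mod_eq_0)
    then show "j = j0" using inj \<open>j0 < m\<close> by (auto dest: inj_onD)
  qed (use \<open>j0 < m\<close> \<open>g j0 = 0\<close> in \<open>auto simp: ap_multiples_def g_def dvd_eq_mod_eq_0\<close>)
  then show ?thesis by simp
qed

lemma ap_multiples_dvd:
  assumes "m dvd d"
  shows "ap_multiples m a d = (if m dvd a then {..<m} else {})"
  using assms by (auto simp: ap_multiples_def dvd_add_left_iff)

lemma card_ap_multiples_prime:
  assumes "prime m"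
  shows "card (ap_multiples m a d) = (if m dvd d then (if m dvd a then m else 0) else 1)"
  using assms card_ap_multiples_coprime[of m d a] ap_multiples_dvd[of m d a]
  by (auto simp: prime_imp_coprime prime_gt_0_nat)

lemma card_multiples_in_progression:
  assumes "d > 0"
  shows "card {i \<in> {a + j * d | j. j < m}. m dvd i} = card (ap_multiples m a d)"
proof -
  have "{i \<in> {a + j * d | j. j < m}. m dvd i} = (\<lambda>j. a + j * d) ` ap_multiples m a d"
    by (auto simp: ap_multiples_def)
  moreover have "inj_on (\<lambda>j. a + j * d) (ap_multiples m a d)"
    using assms by (auto intro: inj_onI)
  ultimately show ?thesis by (simp add: card_image)
qed

(* Double counting: the n multiples of m in {1..mn} are partitioned by the
   value k at that position, and the positions of k form a progression with
   difference k + 1. *)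
lemma valid_seq_multiples_count:
  assumes "valid_seq m n xs" and "m > 0"
  obtains \<theta> where "n = (\<Sum>k\<in>{1..n}. card (ap_multiples m (\<theta> k) (k + 1)))"
proof -
  define P where "P k = {i \<in> {1..m * n}. xs ! (i - 1) = k}" for k
  have len: "length xs = m * n" and entries: "set xs \<subseteq> {1..n}"
    and positions: "\<forall>k\<in>{1..n}. \<exists>t. P k = {t + j * (k + 1) | j. j < m}"
    using assms(1) unfolding valid_seq_def P_def by blast+
  obtain \<theta> where \<theta>: "\<forall>k\<in>{1..n}. P k = {\<theta> k + j * (k + 1) | j. j < m}"
    using bchoice[OF positions] by blast
  define Z where "Z = {i \<in> {1..m * n}. m dvd i}"
  have "card Z = n"
    unfolding Z_def using card_multiples_upto[OF assms(2), of "m * n"] assms(2) by simp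
  have "Z = (\<Union>k\<in>{1..n}. {i \<in> P k. m dvd i})"
  proof safe
    fix i assume "i \<in> Z"
    then have "xs ! (i - 1) \<in> set xs" using len by (auto simp: Z_def)
    then have "xs ! (i - 1) \<in> {1..n}" using entries by blast
    then show "i \<in> (\<Union>k\<in>{1..n}. {i \<in> P k. m dvd i})"
      using \<open>i \<in> Z\<close> by (auto simp: P_def Z_def)
  qed (auto simp: Z_def P_def)
  then have "card Z = (\<Sum>k\<in>{1..n}. card {i \<in> P k. m dvd i})"
    by (simp only:) (rule card_UN_disjoint, auto simp: P_def)
  also have "\<dots> = (\<Sum>k\<in>{1..n}. card (ap_multiples m (\<theta> k) (k + 1)))"
  proof (rule sum.cong)
    fix k assume "k \<in> {1..n}"
    then show "card {i \<in> P k. m dvd i} = card (ap_multiples m (\<theta> k) (k + 1))"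
      using \<theta> card_multiples_in_progression[of "k + 1" "\<theta> k" m] by simp
  qed simp
  finally show ?thesis using that \<open>card Z = n\<close> by simp
qed

lemma sum_card_ap_multiples_prime:
  assumes "prime m" and "finite S"
  shows "(\<Sum>k\<in>S. card (ap_multiples m (a k) (d k)))
           = card {k \<in> S. \<not> m dvd d k} + m * card {k \<in> S. m dvd d k \<and> m dvd a k}"
proof -
  have "(\<Sum>k\<in>S. card (ap_multiples m (a k) (d k)))
          = (\<Sum>k\<in>S. of_bool (\<not> m dvd d k) + m * of_bool (m dvd d k \<and> m dvd a k))"
    using card_ap_multiples_prime[OF assms(1)] by (intro sum.cong) auto
  also have "\<dots> = card {k \<in> S. \<not> m dvd d k} + m * card {k \<in> S. m dvd d k \<and> m dvd a k}"
    using assms(2) by (simp add: sum.distrib sum_distrib_left[symmetric] sum.If_cases Int_def conj_commute)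
  finally show ?thesis .
qed

(* The values k <= n with m dvd k + 1 correspond to the multiples of m in
   {2..n+1}; since m >= 2 this is (n+1) div m. *)
lemma card_shifted_multiples:
  assumes "m \<ge> 2"
  shows "card {k \<in> {1..n}. m dvd k + 1} = (n + 1) div m"
proof -
  have "Suc ` {k \<in> {1..n}. m dvd k + 1} = {x \<in> {1..n + 1}. m dvd x}"
  proof safe
    fix x assume "x \<in> {1..n + 1}" "m dvd x"
    moreover have "x \<noteq> 1" using \<open>m dvd x\<close> assms by auto
    ultimately show "x \<in> Suc ` {k \<in> {1..n}. m dvd k + 1}"
      by (intro image_eqI[of x Suc "x - 1"]) auto
  qed auto
  then have "card {k \<in> {1..n}. m dvd k + 1} = card {x \<in> {1..n + 1}. m dvd x}"
    using card_image[OF inj_Suc] by metis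
  then show ?thesis
    using card_multiples_upto[of m "n + 1"] assms by simp
qed

lemma valid_seq_prime_dvd:
  assumes "prime m" and "valid_seq m n xs"
  shows "m dvd (n + 1) div m"
proof -
  define K where "K = {k \<in> {1..n}. m dvd k + 1}"
  define A where "A = {k \<in> {1..n}. \<not> m dvd k + 1}"
  have "m \<ge> 2" using assms(1) by (rule prime_ge_2_nat)
  obtain \<theta> where "n = (\<Sum>k\<in>{1..n}. card (ap_multiples m (\<theta> k) (k + 1)))"
    using valid_seq_multiples_count[OF assms(2)] \<open>m \<ge> 2\<close> by auto
  also have "\<dots> = card A + m * card {k \<in> {1..n}. m dvd k + 1 \<and> m dvd \<theta> k}"
    unfolding A_def by (rule sum_card_ap_multiples_prime[OF assms(1)]) simp
  finally have "n = card A + m * card {k \<in> {1..n}. m dvd k + 1 \<and> m dvd \<theta> k}" .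
  moreover have "n = card A + card K"
  proof -
    have "{1..n} = A \<union> K" "A \<inter> K = {}" by (auto simp: A_def K_def)
    then show ?thesis by (metis card_Un_disjoint card_atLeastAtMost diff_Suc_1 finite_Un finite_atLeastAtMost)
  qed
  ultimately have "card K = m * card {k \<in> {1..n}. m dvd k + 1 \<and> m dvd \<theta> k}" by simp
  then show ?thesis
    using card_shifted_multiples[OF \<open>m \<ge> 2\<close>, of n] unfolding K_def by (metis dvd_triv_left)
qed

lemma residue_mod_square:
  assumes "m > 0" and "m dvd (n + 1) div m"
  shows "\<exists>r::int. -1 \<le> r \<and> r \<le> int m - 2 \<and> [int n = r] (mod (int m ^ 2))"
proof -
  obtain c where "(n + 1) div m = m * c" using assms(2) by blast
  then have "n + 1 = m ^ 2 * c + (n + 1) mod m"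
    by (metis div_mult_mod_eq mult.assoc mult.commute power2_eq_square)
  then have "int n = int m ^ 2 * int c + (int ((n + 1) mod m) - 1)"
    by (metis add_diff_cancel_right' of_nat_add of_nat_mult of_nat_power of_nat_1 add_diff_eq)
  moreover have "(n + 1) mod m < m" using assms(1) by simp
  ultimately show ?thesis
    by (intro exI[of _ "int ((n + 1) mod m) - 1"]) (auto simp: cong_iff_dvd_diff)
qed

theorem theorem1:
  fixes m n :: nat
  assumes "prime m" and "m \<ge> 2" and "n \<ge> 1" and "p m n \<noteq> 0"
  shows "\<exists>r::int. -1 \<le> r \<and> r \<le> int m - 2 \<and> [int n = r] (mod (int m ^ 2))"
proof -
  have "{xs. valid_seq m n xs} \<noteq> {}"
    using assms(4) unfolding p_def by (metis card.empty image_empty)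
  then obtain xs where "valid_seq m n xs" by blast
  then have "m dvd (n + 1) div m" by (rule valid_seq_prime_dvd[OF assms(1)])
  then show ?thesis using assms(2) by (intro residue_mod_square) simp_all
qed

end
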